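(* Assume the uniform Stokes inf-sup condition below. For each $h$ let $\mathcal J_h:L^2(\Omega,\mathbb M)\to H_N(\mathbf{div},\Omega,\mathbb M)\cap\mathcal P_k(\mathcal T_h,\mathbb M)$ be a bounded linear operator such that (a) $\|\boldsymbol\sigma-\mathcal J_h\boldsymbol\sigma\|_{0,\Omega}\le C\inf_{\boldsymbol\tau_h\in H_N(\mathbf{div},\Omega,\mathbb M)\cap\mathcal P_k(\mathcal T_h,\mathbb M)}\|\boldsymbol\sigma-\boldsymbol\tau_h\|_{0,\Omega}$ for all $\boldsymbol\sigma\in L^2(\Omega,\mathbb M)$ with $C$ independent of $h$, and (b) $\mathbf{div}\,\mathcal J_h\boldsymbol\sigma=Q_h^{k-1}\mathbf{div}\,\boldsymbol\sigma$ for all $\boldsymbol\sigma\in H_N(\mathbf{div},\Omega,\mathbb M)$; and let $\mathcal S_h:\mathcal P_k(\mathcal T_h,\mathbb M)\cap H_N(\mathbf{div},\Omega,\mathbb M)\to X_h^c$ be a linear operator with $\mathbf{div}(\boldsymbol\tau_h-\mathcal S_h\boldsymbol\tau_h)=\mathbf 0$ and $\|\boldsymbol\tau_h-\mathcal S_h\boldsymbol\tau_h\|_{0,\Omega}\le C\|\boldsymbol\tau_h-\boldsymbol\tau_h^{\mathtt t}\|_{0,\Omega}$, $C$ independent of $h$. Then $\mathcal J_h^s:=\mathcal S_h\circ\mathcal J_h:L^2(\Omega,\mathbb S)\to X_h^c$ satisfies (i) $\|\boldsymbol\sigma-\mathcal J_h^s\boldsymbol\sigma\|_{0,\Omega}\le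 C\inf_{\boldsymbol\tau_h\in H_N(\mathbf{div},\Omega,\mathbb M)\cap\mathcal P_k(\mathcal T_h,\mathbb M)}\|\boldsymbol\sigma-\boldsymbol\tau_h\|_{0,\Omega}$ for all $\boldsymbol\sigma\in L^2(\Omega,\mathbb S)$, with $C$ independent of $h$; and (ii) $\mathbf{div}\,\mathcal J_h^s\boldsymbol\sigma=Q_h^{k-1}\mathbf{div}\,\boldsymbol\sigma$ for all $\boldsymbol\sigma\in X$.
   Context: Let $d\in\{2,3\}$, $\Omega\subset\mathbb R^d$ a polyhedral Lipschitz domain with boundary $\Gamma=\Gamma_D\cup\Gamma_N$, $\Gamma_D$ of positive measure, $\Gamma_N=\Gamma\setminus\Gamma_D$, outward normal $\mathbf n$. $\mathbb M$ = real $d\times d$ matrices, $\mathbb S$ the symmetric ones; divergence acts row-wise. $\{\mathcal T_h\}_h$ shape-regular simplicial meshes of size $h$ with $\Gamma_D,\Gamma_N$ unions of boundary faces; $k\ge1$ fixed; $\mathcal P_m(\mathcal T_h,E)$ = piecewise polynomials of degree $\le m$ with values in $E$; $Q_h^{k-1}$ is the $L^2(\Omega,\mathbb R^d)$-orthogonal projection onto $\mathcal P_{k-1}(\mathcal T_h,\mathbb R^d)$. $H^1_N(\Omega,\mathbb R^d)=\{\mathbf v\in H^1:\mathbf v|_{\Gamma_N}=\mathbf 0\}$; $H_N(\mathbf{div},\Omega,\mathbb M)=\{\boldsymbol\tau\in H(\mathbf{div},\Omega,\mathbb M):\langle\boldsymbol\tau\mathbf n,\boldsymbol\phi\rangle_\Gamma=0\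 \forall\boldsymbol\phi\in H^{1/2}(\Gamma,\mathbb R^d),\boldsymbol\phi|_{\Gamma_D}=\mathbf 0\}$; $X$ is the subspace of its symmetric-valued elements; $X_h^c=\mathcal P_k(\mathcal T_h,\mathbb S)\cap X$. Stokes inf-sup condition: there is $\beta>0$ independent of $h$ with $\sup_{\mathbf v_h\in\mathcal P_{k+1}(\mathcal T_h,\mathbb R^d)\cap H^1_N(\Omega,\mathbb R^d)}(\operatorname{div}\mathbf v_h,\phi_h)/\|\mathbf v_h\|_{1,\Omega}\ge\beta\|\phi_h\|_{0,\Omega}$ for all $\phi_h\in\mathcal P_k(\mathcal T_h)$. (Operators $\mathcal J_h$ with properties (a),(b) exist by a smoothed-projection construction of Licht, and operators $\mathcal S_h$ exist under the inf-sup condition.) *)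

theory Defs
  imports "HOL-Analysis.Analysis"
begin

text \<open>Points of R^d are modelled as real^'n (d = CARD('n)); M = real^'n^'n
  (row i = ith row, entry i j = (sigma x) $ i $ j). L^2 elements are represented by
  functions; all equalities of L^2 elements are understood almost everywhere.\<close>

definition pd :: "(real^'n \<Rightarrow> 'b::real_normed_vector) \<Rightarrow> 'n \<Rightarrow> real^'n \<Rightarrow> 'b" where
  "pd f j x = frechet_derivative f (at x) (axis j 1)"

fun Ck :: "nat \<Rightarrow> (real^'n \<Rightarrow> 'b::real_normed_vector) \<Rightarrow> bool" where
  "Ck 0 f = continuous_on UNIV f"
| "Ck (Suc m) f = ((\<forall>x. f differentiable (at x)) \<and> (\<forall>j. Ck m (pd f j)))"

definition smooth_fun :: "(real^'n \<Rightarrow> 'b::real_normed_vector) \<Rightarrow> bool" where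
  "smooth_fun f \<longleftrightarrow> (\<forall>m. Ck m f)"

definition tsupp :: "(real^'n \<Rightarrow> 'b::real_normed_vector) \<Rightarrow> (real^'n) set" where
  "tsupp f = closure {x. f x \<noteq> 0}"

definition test_fun :: "(real^'n) set \<Rightarrow> (real^'n \<Rightarrow> 'b::real_normed_vector) \<Rightarrow> bool" where
  "test_fun \<Omega> \<phi> \<longleftrightarrow> smooth_fun \<phi> \<and> compact (tsupp \<phi>) \<and> tsupp \<phi> \<subseteq> \<Omega>"

definition L2 :: "(real^'n) set \<Rightarrow> (real^'n \<Rightarrow> 'b::euclidean_space) \<Rightarrow> bool" where
  "L2 \<Omega> f \<longleftrightarrow> f \<in> borel_measurable (lebesgue_on \<Omega>)
      \<and> integrable (lebesgue_on \<Omega>) (\<lambda>x. (norm (f x))\<^sup>2)"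

definition L2norm :: "(real^'n) set \<Rightarrow> (real^'n \<Rightarrow> 'b::euclidean_space) \<Rightarrow> real" where
  "L2norm \<Omega> f = sqrt (\<integral>x. (norm (f x))\<^sup>2 \<partial>(lebesgue_on \<Omega>))"

definition L2inner :: "(real^'n) set \<Rightarrow> (real^'n \<Rightarrow> 'b::euclidean_space) \<Rightarrow> (real^'n \<Rightarrow> 'b) \<Rightarrow> real" where
  "L2inner \<Omega> f g = (\<integral>x. f x \<bullet> g x \<partial>(lebesgue_on \<Omega>))"

definition L2proj :: "(real^'n) set \<Rightarrow> ((real^'n \<Rightarrow> 'b::euclidean_space) \<Rightarrow> bool)
    \<Rightarrow> (real^'n \<Rightarrow> 'b) \<Rightarrow> (real^'n \<Rightarrow> 'b) \<Rightarrow> bool" where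
  "L2proj \<Omega> P g q \<longleftrightarrow> P q \<and> (\<forall>v. P v \<longrightarrow> L2inner \<Omega> (\<lambda>x. g x - q x) v = 0)"

definition symm_valued :: "(real^'n) set \<Rightarrow> (real^'n \<Rightarrow> real^'n^'n) \<Rightarrow> bool" where
  "symm_valued \<Omega> \<sigma> \<longleftrightarrow> (AE x in lebesgue_on \<Omega>. transpose (\<sigma> x) = \<sigma> x)"

text \<open>row-wise weak divergence: (div sigma)_i = sum_j d_j sigma_ij\<close>
definition has_weak_div :: "(real^'n) set \<Rightarrow> (real^'n \<Rightarrow> real^'n^'n) \<Rightarrow> (real^'n \<Rightarrow> real^'n) \<Rightarrow> bool" where
  "has_weak_div \<Omega> \<sigma> g \<longleftrightarrow> L2 \<Omega> \<sigma> \<and> L2 \<Omega> g \<and>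
     (\<forall>\<phi> :: real^'n \<Rightarrow> real^'n. test_fun \<Omega> \<phi> \<longrightarrow>
        (\<integral>x. (\<Sum>i\<in>UNIV. \<Sum>j\<in>UNIV. \<sigma> x $ i $ j * pd \<phi> j x $ i) \<partial>(lebesgue_on \<Omega>))
          = - (\<integral>x. g x \<bullet> \<phi> x \<partial>(lebesgue_on \<Omega>)))"

text \<open>weak gradient of a vector field: G_ij = d_j v_i\<close>
definition has_weak_grad :: "(real^'n) set \<Rightarrow> (real^'n \<Rightarrow> real^'n) \<Rightarrow> (real^'n \<Rightarrow> real^'n^'n) \<Rightarrow> bool" where
  "has_weak_grad \<Omega> v G \<longleftrightarrow> L2 \<Omega> v \<and> L2 \<Omega> G \<and>
     (\<forall>\<psi> :: real^'n \<Rightarrow> real^'n^'n. test_fun \<Omega> \<psi> \<longrightarrow>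
        (\<integral>x. (\<Sum>i\<in>UNIV. \<Sum>j\<in>UNIV. v x $ i * pd \<psi> j x $ i $ j) \<partial>(lebesgue_on \<Omega>))
          = - (\<integral>x. G x \<bullet> \<psi> x \<partial>(lebesgue_on \<Omega>)))"

definition H1grad :: "(real^'n) set \<Rightarrow> (real^'n \<Rightarrow> real^'n) \<Rightarrow> (real^'n \<Rightarrow> real^'n^'n)" where
  "H1grad \<Omega> v = (SOME G. has_weak_grad \<Omega> v G)"

definition H1norm :: "(real^'n) set \<Rightarrow> (real^'n \<Rightarrow> real^'n) \<Rightarrow> real" where
  "H1norm \<Omega> v = sqrt ((L2norm \<Omega> v)\<^sup>2 + (L2norm \<Omega> (H1grad \<Omega> v))\<^sup>2)"

definition H1div :: "(real^'n) set \<Rightarrow> (real^'n \<Rightarrow> real^'n) \<Rightarrow> real^'n \<Rightarrow> real" where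
  "H1div \<Omega> v x = (\<Sum>i\<in>UNIV. H1grad \<Omega> v x $ i $ i)"

text \<open>H_N(div,Omega,M): tau in H(div) with <tau n, phi>_Gamma = 0 for all phi vanishing on Gamma_D,
  the duality pairing being given by Green's formula
  <tau n, v>_Gamma = int_Omega tau : grad v + div tau . v  (v tested over C^1 functions vanishing on Gamma_D)\<close>
definition HdivN :: "(real^'n) set \<Rightarrow> (real^'n) set \<Rightarrow> (real^'n \<Rightarrow> real^'n^'n) \<Rightarrow> bool" where
  "HdivN \<Omega> \<Gamma>D \<tau> \<longleftrightarrow> (\<exists>g. has_weak_div \<Omega> \<tau> g \<and>
     (\<forall>v :: real^'n \<Rightarrow> real^'n. Ck 1 v \<and> (\<forall>x\<in>\<Gamma>D. v x = 0) \<longrightarrow>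
        (\<integral>x. (\<Sum>i\<in>UNIV. \<Sum>j\<in>UNIV. \<tau> x $ i $ j * pd v j x $ i) + g x \<bullet> v x \<partial>(lebesgue_on \<Omega>)) = 0))"

definition Xsp :: "(real^'n) set \<Rightarrow> (real^'n) set \<Rightarrow> (real^'n \<Rightarrow> real^'n^'n) \<Rightarrow> bool" where
  "Xsp \<Omega> \<Gamma>D \<tau> \<longleftrightarrow> HdivN \<Omega> \<Gamma>D \<tau> \<and> symm_valued \<Omega> \<tau>"

definition lipschitz_domain :: "(real^'n) set \<Rightarrow> bool" where
  "lipschitz_domain \<Omega> \<longleftrightarrow> open \<Omega> \<and> bounded \<Omega> \<and> connected \<Omega> \<and> \<Omega> \<noteq> {} \<and>
     (\<forall>p\<in>frontier \<Omega>. \<exists>r>0. \<exists>e L g. norm e = 1 \<and>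
         L-lipschitz_on {y. y \<bullet> e = 0} g \<and>
         \<Omega> \<inter> ball p r = {x\<in>ball p r. g (x - (x \<bullet> e) *\<^sub>R e) < x \<bullet> e})"

definition simplex_verts :: "(real^'n) set \<Rightarrow> bool" where
  "simplex_verts V \<longleftrightarrow> finite V \<and> card V = CARD('n) + 1 \<and> \<not> affine_dependent V"

definition mesh :: "(real^'n) set \<Rightarrow> (real^'n) set set \<Rightarrow> bool" where
  "mesh \<Omega> T \<longleftrightarrow> finite T \<and> (\<forall>V\<in>T. simplex_verts V) \<and>
     \<Union> ((\<lambda>V. convex hull V) ` T) = closure \<Omega> \<and>
     (\<forall>V\<in>T. \<forall>W\<in>T. V \<noteq> W \<longrightarrow> convex hull V \<inter> convex hull W = convex hull (V \<inter> W))"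

definition polyhedral_domain :: "(real^'n) set \<Rightarrow> bool" where
  "polyhedral_domain \<Omega> \<longleftrightarrow> (\<exists>T. mesh \<Omega> T)"

definition meshsize :: "(real^'n) set set \<Rightarrow> real" where
  "meshsize T = Max ((\<lambda>V. diameter (convex hull V)) ` T)"

definition inradius :: "(real^'n) set \<Rightarrow> real" where
  "inradius K = Sup {r. \<exists>x. ball x r \<subseteq> K}"

definition bfaces :: "(real^'n) set \<Rightarrow> (real^'n) set set \<Rightarrow> (real^'n) set set" where
  "bfaces \<Omega> T = {convex hull (V - {v}) | V v. V \<in> T \<and> v \<in> V \<and> convex hull (V - {v}) \<subseteq> frontier \<Omega>}"

definition poly_fun :: "nat \<Rightarrow> (real^'n \<Rightarrow> real) \<Rightarrow> bool" where
  "poly_fun m p \<longleftrightarrow> (\<exists>c. \<forall>x. p x =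
      (\<Sum>\<alpha>\<in>{\<alpha>::'n \<Rightarrow> nat. sum \<alpha> UNIV \<le> m}. c \<alpha> * (\<Prod>i\<in>UNIV. x $ i ^ \<alpha> i)))"

definition pw_poly :: "(real^'n) set set \<Rightarrow> nat \<Rightarrow> (real^'n \<Rightarrow> 'b::euclidean_space) \<Rightarrow> bool" where
  "pw_poly T m f \<longleftrightarrow> (\<forall>V\<in>T. \<exists>p. (\<forall>b\<in>Basis. poly_fun m (\<lambda>x. p x \<bullet> b)) \<and>
        (\<forall>x\<in>interior (convex hull V). f x = p x))"

definition Pk :: "(real^'n) set \<Rightarrow> (real^'n) set set \<Rightarrow> nat \<Rightarrow> (real^'n \<Rightarrow> 'b::euclidean_space) \<Rightarrow> bool" where
  "Pk \<Omega> T m f \<longleftrightarrow> L2 \<Omega> f \<and> pw_poly T m f"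

definition Vh :: "(real^'n) set \<Rightarrow> (real^'n) set \<Rightarrow> (real^'n) set set \<Rightarrow> nat \<Rightarrow> (real^'n \<Rightarrow> real^'n^'n) \<Rightarrow> bool" where
  "Vh \<Omega> \<Gamma>D T k \<tau> \<longleftrightarrow> HdivN \<Omega> \<Gamma>D \<tau> \<and> Pk \<Omega> T k \<tau>"

definition Xhc :: "(real^'n) set \<Rightarrow> (real^'n) set \<Rightarrow> (real^'n) set set \<Rightarrow> nat \<Rightarrow> (real^'n \<Rightarrow> real^'n^'n) \<Rightarrow> bool" where
  "Xhc \<Omega> \<Gamma>D T k \<tau> \<longleftrightarrow> Pk \<Omega> T k \<tau> \<and> symm_valued \<Omega> \<tau> \<and> Xsp \<Omega> \<Gamma>D \<tau>"

definition V1h :: "(real^'n) set \<Rightarrow> (real^'n) set \<Rightarrow> (real^'n) set set \<Rightarrow> nat \<Rightarrow> (real^'n \<Rightarrow> real^'n) \<Rightarrow> bool" where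
  "V1h \<Omega> \<Gamma>D T m v \<longleftrightarrow> Pk \<Omega> T m v \<and> continuous_on (closure \<Omega>) v \<and>
      (\<forall>x\<in>frontier \<Omega> - \<Gamma>D. v x = 0)"

definition lin_op :: "(real^'n) set \<Rightarrow> ((real^'n \<Rightarrow> real^'n^'n) \<Rightarrow> bool)
    \<Rightarrow> ((real^'n \<Rightarrow> real^'n^'n) \<Rightarrow> (real^'n \<Rightarrow> real^'n^'n)) \<Rightarrow> bool" where
  "lin_op \<Omega> D A \<longleftrightarrow>
     (\<forall>\<sigma> \<tau> a b. D \<sigma> \<and> D \<tau> \<longrightarrow>
        (AE x in lebesgue_on \<Omega>. A (\<lambda>y. a *\<^sub>R \<sigma> y + b *\<^sub>R \<tau> y) x = a *\<^sub>R A \<sigma> x + b *\<^sub>R A \<tau> x)) \<and>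
     (\<forall>\<sigma> \<tau>. D \<sigma> \<and> D \<tau> \<and> (AE x in lebesgue_on \<Omega>. \<sigma> x = \<tau> x) \<longrightarrow>
        (AE x in lebesgue_on \<Omega>. A \<sigma> x = A \<tau> x))"

end

theory Submission
  imports Defs
begin

text \<open>With \<open>\<tau> = J\<^sub>h \<sigma>\<close>, the error \<open>\<sigma> - S\<^sub>h \<tau>\<close> is \<open>(\<sigma> - \<tau>) + (\<tau> - S\<^sub>h \<tau>)\<close>. The
  second term is controlled by the asymmetry \<open>\<tau> - \<tau>\<^sup>T\<close>, and since \<open>\<sigma>\<close> is symmetric,
  \<open>\<tau> - \<tau>\<^sup>T = (\<tau> - \<sigma>) + (\<sigma> - \<tau>)\<^sup>T\<close> has at most twice the norm of \<open>\<sigma> - \<tau>\<close>; so the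
  quasi-optimality of \<open>J\<^sub>h\<close> passes to \<open>S\<^sub>h \<circ> J\<^sub>h\<close> with constant \<open>C (1 + 2 C\<^sub>S)\<close>.
  The divergence is unchanged because \<open>S\<^sub>h\<close> only adds a divergence-free field and the
  weak divergence is linear.\<close>

lemma norm_transpose [simp]: "norm (transpose (A::real^'n^'m)) = norm A"
proof -
  have "(norm (transpose A))\<^sup>2 = (\<Sum>i\<in>UNIV. \<Sum>j\<in>UNIV. (A $ j $ i)\<^sup>2)"
    by (simp add: norm_vec_def L2_set_def transpose_def sum_nonneg)
  also have "\<dots> = (\<Sum>j\<in>UNIV. \<Sum>i\<in>UNIV. (A $ j $ i)\<^sup>2)"
    by (rule sum.swap)
  also have "\<dots> = (norm A)\<^sup>2"
    by (simp add: norm_vec_def L2_set_def sum_nonneg)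
  finally show ?thesis
    by simp
qed

lemma transpose_diff: "transpose (A - B) = transpose A - transpose (B::'a::ab_group_add^'n^'m)"
  by (simp add: transpose_def vec_eq_iff)

lemma borel_measurable_transpose:
  fixes f :: "'a \<Rightarrow> real^'n^'m"
  assumes "f \<in> borel_measurable M"
  shows "(\<lambda>x. transpose (f x)) \<in> borel_measurable M"
proof -
  have "linear (transpose :: real^'n^'m \<Rightarrow> real^'m^'n)"
    by (rule linearI) (auto simp: transpose_def vec_eq_iff)
  then have "(transpose :: real^'n^'m \<Rightarrow> real^'m^'n) \<in> borel_measurable borel"
    by (intro borel_measurable_continuous_onI linear_continuous_on)
      (simp add: linear_conv_bounded_linear)
  from measurable_compose[OF assms this] show ?thesis
    by (simp add: o_def)
qed

lemma L2_measurable: "L2 \<Omega> f \<Longrightarrow> f \<in> borel_measurable (lebesgue_on \<Omega>)"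
  by (simp add: L2_def)

lemma L2norm_nonneg: "0 \<le> L2norm \<Omega> f"
  unfolding L2norm_def by (auto intro: integral_nonneg_AE)

lemma integrable_dominated_real:
  fixes f g :: "'a \<Rightarrow> real"
  assumes "integrable M f" and "g \<in> borel_measurable M" and "\<And>x. \<bar>g x\<bar> \<le> f x"
  shows "integrable M g"
proof (rule Bochner_Integration.integrable_bound[OF assms(1,2)], rule AE_I2)
  show "norm (g x) \<le> norm (f x)" for x
    using assms(3)[of x] by simp
qed

lemma L2_dominated:
  fixes f :: "real^'n \<Rightarrow> 'b::euclidean_space" and g :: "real^'n \<Rightarrow> 'c::euclidean_space"
  assumes f: "L2 \<Omega> f" and g: "g \<in> borel_measurable (lebesgue_on \<Omega>)"
    and le: "\<And>x. norm (g x) \<le> norm (f x)"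
  shows "L2 \<Omega> g"
proof -
  have "integrable (lebesgue_on \<Omega>) (\<lambda>x. (norm (g x))\<^sup>2)"
  proof (rule integrable_dominated_real)
    show "integrable (lebesgue_on \<Omega>) (\<lambda>x. (norm (f x))\<^sup>2)"
      using f by (simp add: L2_def)
    show "(\<lambda>x. (norm (g x))\<^sup>2) \<in> borel_measurable (lebesgue_on \<Omega>)"
      using g by measurable
    show "\<bar>(norm (g x))\<^sup>2\<bar> \<le> (norm (f x))\<^sup>2" for x
      using le[of x] by (simp add: power_mono)
  qed
  with g show ?thesis
    by (simp add: L2_def)
qed

lemma L2_nth:
  assumes "L2 \<Omega> f"
  shows "L2 \<Omega> (\<lambda>x. f x $ i)"
proof (rule L2_dominated[OF assms])
  have "(\<lambda>v. v $ i) \<in> borel_measurable borel"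
    by (intro borel_measurable_continuous_onI continuous_intros)
  from measurable_compose[OF L2_measurable[OF assms] this]
  show "(\<lambda>x. f x $ i) \<in> borel_measurable (lebesgue_on \<Omega>)" .
qed (rule Finite_Cartesian_Product.norm_nth_le)

lemma L2_transpose:
  assumes "L2 \<Omega> f"
  shows "L2 \<Omega> (\<lambda>x. transpose (f x :: real^'m^'k))"
  by (rule L2_dominated[OF assms borel_measurable_transpose[OF L2_measurable[OF assms]]]) simp

lemma L2_add:
  fixes f g :: "real^'n \<Rightarrow> 'b::euclidean_space"
  assumes f: "L2 \<Omega> f" and g: "L2 \<Omega> g"
  shows "L2 \<Omega> (\<lambda>x. f x + g x)"
proof -
  have le: "(norm (f x + g x))\<^sup>2 \<le> 2 * (norm (f x))\<^sup>2 + 2 * (norm (g x))\<^sup>2" for x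
  proof -
    have "(norm (f x + g x))\<^sup>2 \<le> (norm (f x) + norm (g x))\<^sup>2"
      by (simp add: norm_triangle_ineq power_mono)
    also have "\<dots> \<le> 2 * (norm (f x))\<^sup>2 + 2 * (norm (g x))\<^sup>2"
      using sum_squares_bound[of "norm (f x)" "norm (g x)"] by (simp add: power2_sum)
    finally show ?thesis .
  qed
  have [measurable]: "f \<in> borel_measurable (lebesgue_on \<Omega>)" "g \<in> borel_measurable (lebesgue_on \<Omega>)"
    using f g by (simp_all add: L2_measurable)
  have meas: "(\<lambda>x. f x + g x) \<in> borel_measurable (lebesgue_on \<Omega>)"
    by measurable
  have "integrable (lebesgue_on \<Omega>) (\<lambda>x. (norm (f x + g x))\<^sup>2)"
  proof (rule integrable_dominated_real)
    show "integrable (lebesgue_on \<Omega>) (\<lambda>x. 2 * (norm (f x))\<^sup>2 + 2 * (norm (g x))\<^sup>2)"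
      using f g by (simp add: L2_def)
    show "(\<lambda>x. (norm (f x + g x))\<^sup>2) \<in> borel_measurable (lebesgue_on \<Omega>)"
      by measurable
  qed (simp add: le)
  with meas show ?thesis
    by (simp add: L2_def)
qed

lemma L2_diff:
  fixes f g :: "real^'n \<Rightarrow> 'b::euclidean_space"
  assumes "L2 \<Omega> f" and "L2 \<Omega> g"
  shows "L2 \<Omega> (\<lambda>x. f x - g x)"
proof -
  have "L2 \<Omega> (\<lambda>x. - g x)"
    by (rule L2_dominated[OF assms(2) borel_measurable_uminus[OF L2_measurable[OF assms(2)]]]) simp
  from L2_add[OF assms(1) this] show ?thesis
    by simp
qed

lemma L2_bounded_continuous:
  fixes f :: "real^'n \<Rightarrow> 'b::euclidean_space"
  assumes \<Omega>: "\<Omega> \<in> lmeasurable" and "continuous_on UNIV f" and B: "\<And>x. norm (f x) \<le> B"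
  shows "L2 \<Omega> f"
proof -
  have meas: "f \<in> borel_measurable (lebesgue_on \<Omega>)"
    using continuous_on_subset[OF assms(2) subset_UNIV] fmeasurableD[OF \<Omega>]
    by (rule continuous_imp_measurable_on_sets_lebesgue)
  have "integrable (lebesgue_on \<Omega>) (\<lambda>x. (norm (f x))\<^sup>2)"
  proof (rule finite_measure.integrable_const_bound[OF finite_measure_lebesgue_on[OF \<Omega>]])
    show "AE x in lebesgue_on \<Omega>. norm ((norm (f x))\<^sup>2) \<le> B\<^sup>2"
      using B by (intro AE_I2) (simp add: power_mono)
  qed (use meas in measurable)
  with meas show ?thesis
    by (simp add: L2_def)
qed

lemma integrable_norm_mult_L2:
  fixes f :: "real^'n \<Rightarrow> 'b::euclidean_space" and g :: "real^'n \<Rightarrow> 'c::euclidean_space"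
  assumes f: "L2 \<Omega> f" and g: "L2 \<Omega> g"
  shows "integrable (lebesgue_on \<Omega>) (\<lambda>x. norm (f x) * norm (g x))"
proof (rule integrable_dominated_real)
  show "integrable (lebesgue_on \<Omega>) (\<lambda>x. (norm (f x))\<^sup>2 + (norm (g x))\<^sup>2)"
    using f g by (simp add: L2_def)
  have [measurable]: "f \<in> borel_measurable (lebesgue_on \<Omega>)" "g \<in> borel_measurable (lebesgue_on \<Omega>)"
    using f g by (simp_all add: L2_measurable)
  show "(\<lambda>x. norm (f x) * norm (g x)) \<in> borel_measurable (lebesgue_on \<Omega>)"
    by measurable
  show "\<bar>norm (f x) * norm (g x)\<bar> \<le> (norm (f x))\<^sup>2 + (norm (g x))\<^sup>2" for x
  proof -
    have "0 \<le> norm (f x) * norm (g x)"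
      by simp
    moreover have "2 * norm (f x) * norm (g x) \<le> (norm (f x))\<^sup>2 + (norm (g x))\<^sup>2"
      by (rule sum_squares_bound)
    ultimately show ?thesis
      by (simp only: abs_of_nonneg)
  qed
qed

lemma integrable_inner_L2:
  fixes f g :: "real^'n \<Rightarrow> 'b::euclidean_space"
  assumes f: "L2 \<Omega> f" and g: "L2 \<Omega> g"
  shows "integrable (lebesgue_on \<Omega>) (\<lambda>x. f x \<bullet> g x)"
proof (rule integrable_dominated_real[OF integrable_norm_mult_L2[OF f g]])
  have [measurable]: "f \<in> borel_measurable (lebesgue_on \<Omega>)" "g \<in> borel_measurable (lebesgue_on \<Omega>)"
    using f g by (simp_all add: L2_measurable)
  show "(\<lambda>x. f x \<bullet> g x) \<in> borel_measurable (lebesgue_on \<Omega>)"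
    by measurable
qed (rule Cauchy_Schwarz_ineq2)

lemma L2norm_power2: "(L2norm \<Omega> f)\<^sup>2 = (\<integral>x. (norm (f x))\<^sup>2 \<partial>lebesgue_on \<Omega>)"
  unfolding L2norm_def by (auto intro: integral_nonneg_AE)

lemma L2norm_cong_AE:
  fixes f g :: "real^'n \<Rightarrow> 'b::euclidean_space"
  assumes "f \<in> borel_measurable (lebesgue_on \<Omega>)" and "g \<in> borel_measurable (lebesgue_on \<Omega>)"
    and "AE x in lebesgue_on \<Omega>. f x = g x"
  shows "L2norm \<Omega> f = L2norm \<Omega> g"
proof -
  have "(\<integral>x. (norm (f x))\<^sup>2 \<partial>lebesgue_on \<Omega>) = (\<integral>x. (norm (g x))\<^sup>2 \<partial>lebesgue_on \<Omega>)"
    using assms by (intro integral_cong_AE) (auto elim!: AE_mp)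
  then show ?thesis
    by (simp add: L2norm_def)
qed

lemma nn_integral_norm_power2_L2:
  assumes "L2 \<Omega> f"
  shows "(\<integral>\<^sup>+x. ennreal (norm (f x)) ^ 2 \<partial>lebesgue_on \<Omega>) = ennreal ((L2norm \<Omega> f)\<^sup>2)"
proof -
  have "(\<integral>\<^sup>+x. ennreal (norm (f x)) ^ 2 \<partial>lebesgue_on \<Omega>)
      = (\<integral>\<^sup>+x. ennreal ((norm (f x))\<^sup>2) \<partial>lebesgue_on \<Omega>)"
    by (simp add: ennreal_power)
  also have "\<dots> = ennreal ((L2norm \<Omega> f)\<^sup>2)"
    unfolding L2norm_power2 using assms unfolding L2_def by (intro nn_integral_eq_integral) auto
  finally show ?thesis .
qed

lemma L2_Cauchy_Schwarz:
  fixes f :: "real^'n \<Rightarrow> 'b::euclidean_space" and g :: "real^'n \<Rightarrow> 'c::euclidean_space"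
  assumes f: "L2 \<Omega> f" and g: "L2 \<Omega> g"
  shows "(\<integral>x. norm (f x) * norm (g x) \<partial>lebesgue_on \<Omega>) \<le> L2norm \<Omega> f * L2norm \<Omega> g"
proof -
  let ?M = "lebesgue_on \<Omega>"
  define I where "I = (\<integral>x. norm (f x) * norm (g x) \<partial>?M)"
  have I0: "0 \<le> I"
    unfolding I_def by (auto intro: integral_nonneg_AE)
  have [measurable]: "f \<in> borel_measurable ?M" "g \<in> borel_measurable ?M"
    using f g by (simp_all add: L2_measurable)
  have "(\<integral>\<^sup>+x. ennreal (norm (f x)) * ennreal (norm (g x)) \<partial>?M)
      = (\<integral>\<^sup>+x. ennreal (norm (f x) * norm (g x)) \<partial>?M)"
    by (simp add: ennreal_mult)
  also have "\<dots> = ennreal I"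
    unfolding I_def by (rule nn_integral_eq_integral[OF integrable_norm_mult_L2[OF f g]]) auto
  finally have "(ennreal I)\<^sup>2 \<le> ennreal ((L2norm \<Omega> f)\<^sup>2) * ennreal ((L2norm \<Omega> g)\<^sup>2)"
    using Cauchy_Schwarz_nn_integral[of "\<lambda>x. ennreal (norm (f x))" ?M "\<lambda>x. ennreal (norm (g x))"]
    by (simp add: nn_integral_norm_power2_L2[OF f] nn_integral_norm_power2_L2[OF g])
  then have "I\<^sup>2 \<le> (L2norm \<Omega> f * L2norm \<Omega> g)\<^sup>2"
    using I0 by (simp add: ennreal_power ennreal_mult[symmetric] power_mult_distrib)
  then show ?thesis
    unfolding I_def[symmetric]
    by (rule power2_le_imp_le) (simp add: L2norm_nonneg)
qed

lemma L2norm_triangle: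
  fixes f g :: "real^'n \<Rightarrow> 'b::euclidean_space"
  assumes f: "L2 \<Omega> f" and g: "L2 \<Omega> g"
  shows "L2norm \<Omega> (\<lambda>x. f x + g x) \<le> L2norm \<Omega> f + L2norm \<Omega> g"
proof -
  let ?M = "lebesgue_on \<Omega>"
  have pointwise: "(norm (f x + g x))\<^sup>2 \<le> (norm (f x))\<^sup>2 + 2 * (norm (f x) * norm (g x)) + (norm (g x))\<^sup>2"
    for x
  proof -
    have "(norm (f x + g x))\<^sup>2 \<le> (norm (f x) + norm (g x))\<^sup>2"
      by (simp add: norm_triangle_ineq power_mono)
    then show ?thesis
      by (simp add: power2_sum algebra_simps)
  qed
  have "(L2norm \<Omega> (\<lambda>x. f x + g x))\<^sup>2
      \<le> (\<integral>x. (norm (f x))\<^sup>2 + 2 * (norm (f x) * norm (g x)) + (norm (g x))\<^sup>2 \<partial>?M)"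
    unfolding L2norm_power2 using L2_add[OF f g] f g integrable_norm_mult_L2[OF f g]
    by (intro integral_mono pointwise) (auto simp: L2_def)
  also have "\<dots> = (L2norm \<Omega> f)\<^sup>2 + 2 * (\<integral>x. norm (f x) * norm (g x) \<partial>?M) + (L2norm \<Omega> g)\<^sup>2"
    using f g integrable_norm_mult_L2[OF f g] by (simp add: L2norm_power2 L2_def)
  also have "\<dots> \<le> (L2norm \<Omega> f + L2norm \<Omega> g)\<^sup>2"
    using L2_Cauchy_Schwarz[OF f g] by (simp add: power2_sum)
  finally show ?thesis
    by (rule power2_le_imp_le) (intro add_nonneg_nonneg L2norm_nonneg)
qed

lemma L2norm_asymmetry_le:
  fixes \<sigma> \<tau> :: "real^'n \<Rightarrow> real^'n^'n"
  assumes \<sigma>: "L2 \<Omega> \<sigma>" "symm_valued \<Omega> \<sigma>" and \<tau>: "L2 \<Omega> \<tau>"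
  shows "L2norm \<Omega> (\<lambda>x. \<tau> x - transpose (\<tau> x)) \<le> 2 * L2norm \<Omega> (\<lambda>x. \<sigma> x - \<tau> x)"
proof -
  have [measurable]: "\<sigma> \<in> borel_measurable (lebesgue_on \<Omega>)" "\<tau> \<in> borel_measurable (lebesgue_on \<Omega>)"
    using \<sigma> \<tau> by (simp_all add: L2_measurable)
  have [measurable]: "(\<lambda>x. transpose (\<sigma> x)) \<in> borel_measurable (lebesgue_on \<Omega>)"
    "(\<lambda>x. transpose (\<tau> x)) \<in> borel_measurable (lebesgue_on \<Omega>)"
    by (simp_all add: borel_measurable_transpose)
  have "L2norm \<Omega> (\<lambda>x. \<tau> x - transpose (\<tau> x))
      = L2norm \<Omega> (\<lambda>x. (\<tau> x - \<sigma> x) + transpose (\<sigma> x - \<tau> x))"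
  proof (rule L2norm_cong_AE)
    show "AE x in lebesgue_on \<Omega>. \<tau> x - transpose (\<tau> x) = (\<tau> x - \<sigma> x) + transpose (\<sigma> x - \<tau> x)"
      using \<sigma>(2) unfolding symm_valued_def by eventually_elim (simp add: transpose_diff)
  qed (simp_all add: transpose_diff)
  also have "\<dots> \<le> L2norm \<Omega> (\<lambda>x. \<tau> x - \<sigma> x) + L2norm \<Omega> (\<lambda>x. transpose (\<sigma> x - \<tau> x))"
    using assms by (intro L2norm_triangle L2_diff L2_transpose)
  also have "\<dots> = 2 * L2norm \<Omega> (\<lambda>x. \<sigma> x - \<tau> x)"
    by (simp add: L2norm_def norm_minus_commute)
  finally show ?thesis .
qed

lemma L2norm_diff_symmetrized_le:
  fixes \<sigma> \<tau> \<rho> :: "real^'n \<Rightarrow> real^'n^'n"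
  assumes \<sigma>: "L2 \<Omega> \<sigma>" "symm_valued \<Omega> \<sigma>" and \<tau>: "L2 \<Omega> \<tau>" and \<rho>: "L2 \<Omega> \<rho>"
    and correction: "L2norm \<Omega> (\<lambda>x. \<tau> x - \<rho> x) \<le> C * L2norm \<Omega> (\<lambda>x. \<tau> x - transpose (\<tau> x))"
  shows "L2norm \<Omega> (\<lambda>x. \<sigma> x - \<rho> x) \<le> (1 + 2 * \<bar>C\<bar>) * L2norm \<Omega> (\<lambda>x. \<sigma> x - \<tau> x)"
proof -
  have "L2norm \<Omega> (\<lambda>x. \<sigma> x - \<rho> x) = L2norm \<Omega> (\<lambda>x. (\<sigma> x - \<tau> x) + (\<tau> x - \<rho> x))"
    by simp
  also have "\<dots> \<le> L2norm \<Omega> (\<lambda>x. \<sigma> x - \<tau> x) + L2norm \<Omega> (\<lambda>x. \<tau> x - \<rho> x)"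
    using assms by (intro L2norm_triangle L2_diff)
  also have "L2norm \<Omega> (\<lambda>x. \<tau> x - \<rho> x) \<le> \<bar>C\<bar> * L2norm \<Omega> (\<lambda>x. \<tau> x - transpose (\<tau> x))"
    using correction mult_right_mono[OF abs_ge_self L2norm_nonneg] by (rule order_trans)
  also have "\<dots> \<le> \<bar>C\<bar> * (2 * L2norm \<Omega> (\<lambda>x. \<sigma> x - \<tau> x))"
    using L2norm_asymmetry_le[OF \<sigma> \<tau>] by (intro mult_left_mono) auto
  finally show ?thesis
    by (simp add: algebra_simps)
qed

lemma tsupp_vanishes: "x \<notin> tsupp f \<Longrightarrow> f x = 0"
  using closure_subset[of "{x. f x \<noteq> 0}"] by (auto simp: tsupp_def)

lemma pd_vanishes_outside_tsupp:
  assumes "x \<notin> tsupp f"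
  shows "pd f j x = 0"
proof -
  have "(f has_derivative (\<lambda>_. 0)) (at x)"
  proof (rule has_derivative_transform_within_open[where f = "\<lambda>_. 0" and s = "- tsupp f"])
    show "open (- tsupp f)"
      by (simp add: tsupp_def open_Compl)
    show "0 = f y" if "y \<in> - tsupp f" for y
      using that tsupp_vanishes by fastforce
  qed (use assms in simp_all)
  from frechet_derivative_at[OF this, symmetric] show ?thesis
    by (simp add: pd_def)
qed

lemma test_fun_pd:
  assumes "test_fun \<Omega> \<phi>"
  shows "test_fun \<Omega> (pd \<phi> j)"
proof -
  have "Ck m (pd \<phi> j)" for m
  proof -
    have "Ck (Suc m) \<phi>"
      using assms unfolding test_fun_def smooth_fun_def by blast
    then show ?thesis
      by simp
  qed
  then have "smooth_fun (pd \<phi> j)"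
    by (simp add: smooth_fun_def)
  moreover have sub: "tsupp (pd \<phi> j) \<subseteq> tsupp \<phi>"
    unfolding tsupp_def[of "pd \<phi> j"]
  proof (rule closure_minimal)
    show "{x. pd \<phi> j x \<noteq> 0} \<subseteq> tsupp \<phi>"
      using pd_vanishes_outside_tsupp by blast
  qed (simp add: tsupp_def)
  moreover have "compact (tsupp \<phi> \<inter> tsupp (pd \<phi> j))"
    using assms by (intro compact_Int_closed) (simp_all add: test_fun_def tsupp_def)
  ultimately show ?thesis
    using assms unfolding test_fun_def by (auto simp: Int_absorb1)
qed

lemma L2_test_fun:
  fixes \<phi> :: "real^'n \<Rightarrow> 'b::euclidean_space"
  assumes \<Omega>: "\<Omega> \<in> lmeasurable" and \<phi>: "test_fun \<Omega> \<phi>"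
  shows "L2 \<Omega> \<phi>"
proof -
  have "Ck 0 \<phi>"
    using \<phi> unfolding test_fun_def smooth_fun_def by blast
  then have cont: "continuous_on UNIV \<phi>"
    by simp
  have "compact (\<phi> ` tsupp \<phi>)"
    using \<phi> continuous_on_subset[OF cont subset_UNIV]
    by (intro compact_continuous_image) (simp_all add: test_fun_def)
  then have "bounded (\<phi> ` tsupp \<phi>)"
    by (rule compact_imp_bounded)
  then obtain B where B: "\<forall>y\<in>\<phi> ` tsupp \<phi>. norm y \<le> B"
    by (auto simp: bounded_iff)
  have "norm (\<phi> x) \<le> max B 0" for x
    using B by (cases "x \<in> tsupp \<phi>") (auto simp: tsupp_vanishes le_max_iff_disj)
  with \<Omega> cont show ?thesis
    by (rule L2_bounded_continuous)
qed

lemma integrable_div_pairing: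
  fixes \<sigma> :: "real^'n \<Rightarrow> real^'n^'n" and \<phi> :: "real^'n \<Rightarrow> real^'n"
  assumes \<Omega>: "\<Omega> \<in> lmeasurable" and \<sigma>: "L2 \<Omega> \<sigma>" and \<phi>: "test_fun \<Omega> \<phi>"
  shows "integrable (lebesgue_on \<Omega>) (\<lambda>x. \<Sum>i\<in>UNIV. \<Sum>j\<in>UNIV. \<sigma> x $ i $ j * pd \<phi> j x $ i)"
proof -
  have "integrable (lebesgue_on \<Omega>) (\<lambda>x. \<sigma> x $ i $ j * pd \<phi> j x $ i)" for i j
    using integrable_inner_L2[OF L2_nth[OF L2_nth[OF \<sigma>, where i = i], where i = j]
        L2_nth[OF L2_test_fun[OF \<Omega> test_fun_pd[OF \<phi>, where j = j]], where i = i]]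
    by (simp add: inner_real_def)
  then show ?thesis
    by (intro Bochner_Integration.integrable_sum)
qed

lemma has_weak_div_diff:
  fixes \<sigma> \<tau> :: "real^'n \<Rightarrow> real^'n^'n" and g g' :: "real^'n \<Rightarrow> real^'n"
  assumes \<Omega>: "\<Omega> \<in> lmeasurable" and \<sigma>: "has_weak_div \<Omega> \<sigma> g" and \<tau>: "has_weak_div \<Omega> \<tau> g'"
  shows "has_weak_div \<Omega> (\<lambda>x. \<sigma> x - \<tau> x) (\<lambda>x. g x - g' x)"
  unfolding has_weak_div_def
proof (intro conjI allI impI)
  have L2: "L2 \<Omega> \<sigma>" "L2 \<Omega> \<tau>" "L2 \<Omega> g" "L2 \<Omega> g'"
    using \<sigma> \<tau> by (simp_all add: has_weak_div_def)
  then show "L2 \<Omega> (\<lambda>x. \<sigma> x - \<tau> x)" "L2 \<Omega> (\<lambda>x. g x - g' x)"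
    by (simp_all add: L2_diff)
  fix \<phi> :: "real^'n \<Rightarrow> real^'n"
  assume \<phi>: "test_fun \<Omega> \<phi>"
  let ?pairing = "\<lambda>\<sigma> x. \<Sum>i\<in>UNIV. \<Sum>j\<in>UNIV. \<sigma> x $ i $ j * pd \<phi> j x $ i"
  have "(\<integral>x. ?pairing (\<lambda>x. \<sigma> x - \<tau> x) x \<partial>lebesgue_on \<Omega>)
      = (\<integral>x. ?pairing \<sigma> x - ?pairing \<tau> x \<partial>lebesgue_on \<Omega>)"
    by (simp add: left_diff_distrib sum_subtractf)
  also have "\<dots> = (\<integral>x. ?pairing \<sigma> x \<partial>lebesgue_on \<Omega>) - (\<integral>x. ?pairing \<tau> x \<partial>lebesgue_on \<Omega>)"
    using L2 by (intro Bochner_Integration.integral_diff integrable_div_pairing[OF \<Omega> _ \<phi>])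
  also have "\<dots> = (\<integral>x. g' x \<bullet> \<phi> x \<partial>lebesgue_on \<Omega>) - (\<integral>x. g x \<bullet> \<phi> x \<partial>lebesgue_on \<Omega>)"
    using \<sigma> \<tau> \<phi> by (simp add: has_weak_div_def)
  also have "\<dots> = - (\<integral>x. (g x - g' x) \<bullet> \<phi> x \<partial>lebesgue_on \<Omega>)"
    using L2 L2_test_fun[OF \<Omega> \<phi>] by (simp add: inner_diff_left integrable_inner_L2)
  finally show "(\<integral>x. ?pairing (\<lambda>x. \<sigma> x - \<tau> x) x \<partial>lebesgue_on \<Omega>)
      = - (\<integral>x. (g x - g' x) \<bullet> \<phi> x \<partial>lebesgue_on \<Omega>)" .
qed

lemma has_weak_div_divfree_correction:
  fixes \<tau> \<rho> :: "real^'n \<Rightarrow> real^'n^'n"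
  assumes "\<Omega> \<in> lmeasurable" and "has_weak_div \<Omega> \<tau> q"
    and "has_weak_div \<Omega> (\<lambda>x. \<tau> x - \<rho> x) (\<lambda>x. 0)"
  shows "has_weak_div \<Omega> \<rho> q"
  using has_weak_div_diff[OF assms] by simp

theorem corollary4p7:
  fixes \<Omega> :: "(real^'n) set" and \<Gamma>D :: "(real^'n) set"
    and H :: "real set" and T :: "real \<Rightarrow> (real^'n) set set" and k :: nat
    and J S :: "real \<Rightarrow> (real^'n \<Rightarrow> real^'n^'n) \<Rightarrow> (real^'n \<Rightarrow> real^'n^'n)"
  assumes dim: "CARD('n) = 2 \<or> CARD('n) = 3"
    and dom: "lipschitz_domain \<Omega>" "polyhedral_domain \<Omega>"
    and GammaD: "\<Gamma>D \<subseteq> frontier \<Omega>" "\<Gamma>D \<noteq> {}"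
    and meshes: "\<forall>h\<in>H. 0 < h \<and> mesh \<Omega> (T h) \<and> meshsize (T h) = h \<and>
                   (\<exists>F \<subseteq> bfaces \<Omega> (T h). \<Gamma>D = \<Union> F)"
    and shape_reg: "\<exists>c. \<forall>h\<in>H. \<forall>V\<in>T h. diameter (convex hull V) \<le> c * inradius (convex hull V)"
    and k: "1 \<le> k"
    and infsup: "\<exists>\<beta>>0. \<forall>h\<in>H. \<forall>\<phi> :: real^'n \<Rightarrow> real. Pk \<Omega> (T h) k \<phi> \<longrightarrow>
        \<beta> * L2norm \<Omega> \<phi> \<le>
          (SUP v\<in>{v. V1h \<Omega> \<Gamma>D (T h) (k + 1) v \<and> H1norm \<Omega> v \<noteq> 0}.
              (\<integral>x. H1div \<Omega> v x * \<phi> x \<partial>(lebesgue_on \<Omega>)) / H1norm \<Omega> v)"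
    and J_op: "\<forall>h\<in>H. lin_op \<Omega> (L2 \<Omega>) (J h) \<and>
        (\<exists>M. \<forall>\<sigma>. L2 \<Omega> \<sigma> \<longrightarrow> L2norm \<Omega> (J h \<sigma>) \<le> M * L2norm \<Omega> \<sigma>) \<and>
        (\<forall>\<sigma>. L2 \<Omega> \<sigma> \<longrightarrow> Vh \<Omega> \<Gamma>D (T h) k (J h \<sigma>))"
    and J_a: "\<exists>C. \<forall>h\<in>H. \<forall>\<sigma>. L2 \<Omega> \<sigma> \<longrightarrow>
        L2norm \<Omega> (\<lambda>x. \<sigma> x - J h \<sigma> x)
          \<le> C * (INF \<tau>\<in>{\<tau>. Vh \<Omega> \<Gamma>D (T h) k \<tau>}. L2norm \<Omega> (\<lambda>x. \<sigma> x - \<tau> x))"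
    and J_b: "\<forall>h\<in>H. \<forall>\<sigma> g q. HdivN \<Omega> \<Gamma>D \<sigma> \<and> has_weak_div \<Omega> \<sigma> g \<and>
        L2proj \<Omega> (Pk \<Omega> (T h) (k - 1)) g q \<longrightarrow> has_weak_div \<Omega> (J h \<sigma>) q"
    and S_op: "\<forall>h\<in>H. lin_op \<Omega> (Vh \<Omega> \<Gamma>D (T h) k) (S h) \<and>
        (\<forall>\<tau>. Vh \<Omega> \<Gamma>D (T h) k \<tau> \<longrightarrow> Xhc \<Omega> \<Gamma>D (T h) k (S h \<tau>))"
    and S_prop: "\<exists>C. \<forall>h\<in>H. \<forall>\<tau>. Vh \<Omega> \<Gamma>D (T h) k \<tau> \<longrightarrow>
        has_weak_div \<Omega> (\<lambda>x. \<tau> x - S h \<tau> x) (\<lambda>x. 0) \<and>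
        L2norm \<Omega> (\<lambda>x. \<tau> x - S h \<tau> x) \<le> C * L2norm \<Omega> (\<lambda>x. \<tau> x - transpose (\<tau> x))"
  shows "\<exists>C. \<forall>h\<in>H.
     (\<forall>\<sigma>. L2 \<Omega> \<sigma> \<and> symm_valued \<Omega> \<sigma> \<longrightarrow>
        Xhc \<Omega> \<Gamma>D (T h) k (S h (J h \<sigma>)) \<and>
        L2norm \<Omega> (\<lambda>x. \<sigma> x - S h (J h \<sigma>) x)
          \<le> C * (INF \<tau>\<in>{\<tau>. Vh \<Omega> \<Gamma>D (T h) k \<tau>}. L2norm \<Omega> (\<lambda>x. \<sigma> x - \<tau> x))) \<and>
     (\<forall>\<sigma> g q. Xsp \<Omega> \<Gamma>D \<sigma> \<and> has_weak_div \<Omega> \<sigma> g \<and>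
        L2proj \<Omega> (Pk \<Omega> (T h) (k - 1)) g q \<longrightarrow> has_weak_div \<Omega> (S h (J h \<sigma>)) q)"
proof -
  \<comment> \<open>The geometric hypotheses and the inf-sup condition are only needed to construct
    \<open>J\<^sub>h\<close> and \<open>S\<^sub>h\<close>, whose properties are assumed here.\<close>
  define best where "best h \<sigma> = (INF \<tau>\<in>{\<tau>. Vh \<Omega> \<Gamma>D (T h) k \<tau>}. L2norm \<Omega> (\<lambda>x. \<sigma> x - \<tau> x))"
    for h \<sigma>
  obtain Ca where Ca: "\<And>h \<sigma>. h \<in> H \<Longrightarrow> L2 \<Omega> \<sigma> \<Longrightarrow> L2norm \<Omega> (\<lambda>x. \<sigma> x - J h \<sigma> x) \<le> Ca * best h \<sigma>"
    using J_a unfolding best_def by blast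
  obtain Cs where
    S_div: "\<And>h \<tau>. h \<in> H \<Longrightarrow> Vh \<Omega> \<Gamma>D (T h) k \<tau> \<Longrightarrow> has_weak_div \<Omega> (\<lambda>x. \<tau> x - S h \<tau> x) (\<lambda>x. 0)"
    and S_err: "\<And>h \<tau>. h \<in> H \<Longrightarrow> Vh \<Omega> \<Gamma>D (T h) k \<tau> \<Longrightarrow>
      L2norm \<Omega> (\<lambda>x. \<tau> x - S h \<tau> x) \<le> Cs * L2norm \<Omega> (\<lambda>x. \<tau> x - transpose (\<tau> x))"
    using S_prop by blast
  have J_Vh: "\<And>h \<sigma>. h \<in> H \<Longrightarrow> L2 \<Omega> \<sigma> \<Longrightarrow> Vh \<Omega> \<Gamma>D (T h) k (J h \<sigma>)"
    using J_op by blast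
  have S_Xhc: "\<And>h \<tau>. h \<in> H \<Longrightarrow> Vh \<Omega> \<Gamma>D (T h) k \<tau> \<Longrightarrow> Xhc \<Omega> \<Gamma>D (T h) k (S h \<tau>)"
    using S_op by blast
  have \<Omega>: "\<Omega> \<in> lmeasurable"
    using dom(1) by (simp add: lipschitz_domain_def lmeasurable_open)
  show ?thesis
    unfolding best_def[symmetric]
  proof (intro exI[of _ "(1 + 2 * \<bar>Cs\<bar>) * Ca"] ballI allI impI conjI)
    fix h \<sigma>
    assume h: "h \<in> H" and \<sigma>: "L2 \<Omega> \<sigma> \<and> symm_valued \<Omega> \<sigma>"
    have \<tau>: "Vh \<Omega> \<Gamma>D (T h) k (J h \<sigma>)"
      using J_Vh h \<sigma> by blast
    then show "Xhc \<Omega> \<Gamma>D (T h) k (S h (J h \<sigma>))"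
      using S_Xhc h by blast
    have "L2norm \<Omega> (\<lambda>x. \<sigma> x - S h (J h \<sigma>) x) \<le> (1 + 2 * \<bar>Cs\<bar>) * L2norm \<Omega> (\<lambda>x. \<sigma> x - J h \<sigma> x)"
      using \<sigma> \<tau> S_Xhc[OF h \<tau>] S_err[OF h \<tau>]
      by (intro L2norm_diff_symmetrized_le) (simp_all add: Vh_def Xhc_def Pk_def)
    also have "\<dots> \<le> (1 + 2 * \<bar>Cs\<bar>) * (Ca * best h \<sigma>)"
      using Ca h \<sigma> by (intro mult_left_mono) simp_all
    finally show "L2norm \<Omega> (\<lambda>x. \<sigma> x - S h (J h \<sigma>) x) \<le> (1 + 2 * \<bar>Cs\<bar>) * Ca * best h \<sigma>"
      by (simp add: mult.assoc)
  next
    fix h \<sigma> g q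
    assume h: "h \<in> H"
      and \<sigma>: "Xsp \<Omega> \<Gamma>D \<sigma> \<and> has_weak_div \<Omega> \<sigma> g \<and> L2proj \<Omega> (Pk \<Omega> (T h) (k - 1)) g q"
    have "has_weak_div \<Omega> (J h \<sigma>) q"
      using J_b h \<sigma> unfolding Xsp_def by blast
    moreover have "Vh \<Omega> \<Gamma>D (T h) k (J h \<sigma>)"
      using J_Vh h \<sigma> by (simp add: has_weak_div_def)
    ultimately show "has_weak_div \<Omega> (S h (J h \<sigma>)) q"
      using has_weak_div_divfree_correction[OF \<Omega>] S_div[OF h] by blast
  qed
qed

end
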